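(* Let $t<1$. There exists a positive integer $N$, depending only on $t$, such that for every integer $n\ge N$ there exists an analytic function $f_n(z)=\sum_{k\ge 1} b_k z^k$ on $\mathbb{D}$ with non-negative Taylor coefficients, $f_n(0)=0$ and $\|f_n\|_{\mathcal{B}}\le 1$, satisfying $$ \mathcal{F}^t_n(f_n)=\sum_{k=1}^n k^t|b_k|^2 > n^t B_n^2. $$
   Context: $\mathbb{D}$ is the open unit disc. The Bloch space $\mathcal{B}$ consists of analytic functions $f$ on $\mathbb{D}$ with finite norm $\|f\|_{\mathcal{B}}=|f(0)|+\sup_{z\in\mathbb{D}}(1-|z|^2)|f'(z)|$. For $n\ge 2$, $B_n=\frac{n+1}{2n}\left(\frac{n+1}{n-1}\right)^{(n-1)/2}$. *)

theory Defs
  imports "HOL-Analysis.Analysis"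
begin

definition bloch :: "(complex \<Rightarrow> complex) \<Rightarrow> bool" where
  "bloch f \<longleftrightarrow> f holomorphic_on ball 0 1 \<and>
     bdd_above ((\<lambda>z. (1 - (norm z)\<^sup>2) * norm (deriv f z)) ` ball 0 1)"

definition bloch_norm :: "(complex \<Rightarrow> complex) \<Rightarrow> real" where
  "bloch_norm f = norm (f 0) + (SUP z\<in>ball 0 1. (1 - (norm z)\<^sup>2) * norm (deriv f z))"

text \<open>The constant B_n (meaningful for n \<ge> 2).\<close>
definition B_const :: "nat \<Rightarrow> real" where
  "B_const n = (real n + 1) / (2 * real n) *
      ((real n + 1) / (real n - 1)) powr ((real n - 1) / 2)"

end

theory Submission
  imports Defs "HOL-Real_Asymp.Real_Asymp"
begin

text \<open>The monomial \<open>B\<^sub>n z\<^sup>n\<close> has Bloch seminorm 1 and \<open>\<F>\<^sup>t\<^sub>n\<close> equal to \<open>n\<^sup>t B\<^sub>n\<^sup>2\<close>.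
  Shrinking it to \<open>c z\<^sup>n\<close> with \<open>c = B\<^sub>n (1 - s/2)\<close>, \<open>s = 2 ln(6n)/(n-1)\<close>, makes room
  for the term \<open>z/2\<close>: where \<open>r\<^sup>2 \<ge> 1 - s\<close> the weight \<open>1 - r\<^sup>2\<close> makes \<open>z/2\<close> cost at
  most \<open>s/2\<close>, and where \<open>r\<^sup>2 < 1 - s\<close> we have \<open>r\<^sup>n\<^sup>-\<^sup>1 \<le> 1/(6n)\<close>, so the monomial
  costs at most \<open>1/2\<close>. Hence \<open>f\<^sub>n = z/2 + c z\<^sup>n\<close> lies in the unit ball of the Bloch space,
  and \<open>\<F>\<^sup>t\<^sub>n(f\<^sub>n) = 1/4 + n\<^sup>t c\<^sup>2\<close> exceeds \<open>n\<^sup>t B\<^sub>n\<^sup>2\<close> as soon as \<open>9 n\<^sup>t s < 1/4\<close>,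
  which holds for large \<open>n\<close> because \<open>t < 1\<close>.\<close>

lemma powr_mult_one_minus_le:
  fixes k x :: real
  assumes k: "k > 0" and x: "0 \<le> x" "x \<le> 1"
  shows "(k + 1) * ((k + 1) / k) powr k * (x powr k * (1 - x)) \<le> 1"
proof (cases "x = 0 \<or> x = 1")
  case True
  then show ?thesis by auto
next
  case False
  define A B where "A = (k + 1) / k * x" and "B = (k + 1) * (1 - x)"
  have A: "A > 0" and B: "B > 0" using k x False by (auto simp: A_def B_def)
  have "A powr (k / (k + 1)) * B powr (1 / (k + 1)) \<le> k / (k + 1) * A + 1 / (k + 1) * B"
    by (rule Youngs_inequality_0) (use k A B in \<open>auto simp: field_simps\<close>)
  also have "\<dots> = 1"
    using k by (simp add: A_def B_def)
  finally have "(A powr (k / (k + 1)) * B powr (1 / (k + 1))) powr (k + 1) \<le> 1 powr (k + 1)"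
    using k by (intro powr_mono2) auto
  also have "(A powr (k / (k + 1)) * B powr (1 / (k + 1))) powr (k + 1) = A powr k * B"
    using k A B by (simp add: powr_mult powr_powr)
  also have "A powr k = ((k + 1) / k) powr k * x powr k"
    unfolding A_def by (rule powr_mult)
  finally show ?thesis by (simp add: B_def algebra_simps)
qed

lemma B_const_pos: "n \<ge> 2 \<Longrightarrow> B_const n > 0"
  by (simp add: B_const_def)

lemma real_mult_B_const:
  assumes "n \<ge> 2"
  defines "k \<equiv> (real n - 1) / 2"
  shows "real n * B_const n = (k + 1) * ((k + 1) / k) powr k"
proof -
  have "(k + 1) / k = (real n + 1) / (real n - 1)" and "k + 1 = (real n + 1) / 2"
    using assms by (auto simp: k_def field_simps)
  then show ?thesis
    using assms by (simp only:) (simp add: B_const_def k_def)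
qed

lemma B_const_le_exp_1:
  assumes "n \<ge> 2"
  shows "B_const n \<le> exp 1"
proof -
  define k where "k = (real n - 1) / 2"
  have k: "k > 0" using assms by (simp add: k_def)
  have "((k + 1) / k) powr k \<le> exp (1 / k) powr k"
    using k exp_ge_add_one_self[of "1 / k"] by (intro powr_mono2) (auto simp: field_simps)
  also have "\<dots> = exp 1" using k by (simp add: powr_def)
  finally have "real n * B_const n \<le> (k + 1) * exp 1"
    using k by (simp add: real_mult_B_const[OF assms] k_def[symmetric])
  moreover have "k + 1 \<le> real n" using assms by (simp add: k_def field_simps)
  ultimately have "real n * B_const n \<le> real n * exp 1"
    by (meson exp_gt_zero less_imp_le mult_right_mono order_trans)
  then show ?thesis using assms by simp
qed

lemma monomial_bloch_weight_le:
  fixes r :: real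
  assumes n: "n \<ge> 2" and r: "0 \<le> r" "r \<le> 1"
  shows "B_const n * ((1 - r\<^sup>2) * real n * r ^ (n - 1)) \<le> 1"
proof -
  define k where "k = (real n - 1) / 2"
  have k: "k > 0" using n by (simp add: k_def)
  have "real (n - 1) = 2 * k" using n by (simp add: k_def of_nat_diff)
  then have "r ^ (n - 1) = r powr (2 * k)"
    using powr_realpow'[of r "n - 1"] n r by simp
  also have "\<dots> = (r powr 2) powr k" by (simp add: powr_powr)
  also have "r powr 2 = r\<^sup>2" using r by simp
  finally have "B_const n * ((1 - r\<^sup>2) * real n * r ^ (n - 1))
      = (real n * B_const n) * ((r\<^sup>2) powr k * (1 - r\<^sup>2))"
    by (simp only: mult_ac)
  also have "\<dots> = (k + 1) * ((k + 1) / k) powr k * ((r\<^sup>2) powr k * (1 - r\<^sup>2))"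
    unfolding real_mult_B_const[OF n] k_def ..
  also have "\<dots> \<le> 1"
    using k r by (intro powr_mult_one_minus_le) (auto simp: power_le_one)
  finally show ?thesis .
qed

lemma power_le_inverse_if_square_le_one_minus:
  fixes r s a :: real and m :: nat
  assumes r: "0 \<le> r" "r\<^sup>2 \<le> 1 - s" and a: "a > 0" "2 * ln a \<le> s * m"
  shows "r ^ m \<le> 1 / a"
proof -
  have "r\<^sup>2 \<le> (exp (- s / 2))\<^sup>2"
    using r exp_ge_add_one_self[of "- s"] by (simp add: power2_eq_square exp_add[symmetric])
  then have "r \<le> exp (- s / 2)" by (rule power2_le_imp_le) simp
  then have "r ^ m \<le> exp (- s / 2) ^ m" using r by (intro power_mono)
  also have "\<dots> = exp (- (s * m) / 2)" by (simp add: exp_of_nat_mult[symmetric])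
  also have "\<dots> \<le> exp (- ln a)" using a by simp
  also have "\<dots> = 1 / a" using a by (simp add: exp_minus inverse_eq_divide)
  finally show ?thesis .
qed

lemma two_term_bloch_weight_le_1:
  fixes r s :: real
  assumes n: "n \<ge> 2" and s: "0 \<le> s" "s \<le> 2" "2 * ln (6 * real n) \<le> s * (real n - 1)"
    and r: "0 \<le> r" "r < 1"
  shows "(1 - r\<^sup>2) * (1 / 2 + B_const n * (1 - s / 2) * real n * r ^ (n - 1)) \<le> 1"
proof (cases "r\<^sup>2 \<ge> 1 - s")
  case True
  have "B_const n * ((1 - r\<^sup>2) * real n * r ^ (n - 1)) \<le> 1"
    using n r by (intro monomial_bloch_weight_le) auto
  then have "(1 - s / 2) * (B_const n * ((1 - r\<^sup>2) * real n * r ^ (n - 1))) \<le> 1 - s / 2"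
    using s by (simp add: mult_left_le)
  moreover have "(1 - r\<^sup>2) / 2 \<le> s / 2" using True by simp
  ultimately have
    "(1 - r\<^sup>2) / 2 + (1 - s / 2) * (B_const n * ((1 - r\<^sup>2) * real n * r ^ (n - 1))) \<le> 1"
    by linarith
  then show ?thesis by (simp add: algebra_simps add_divide_distrib diff_divide_distrib)
next
  case False
  have "r ^ (n - 1) \<le> 1 / (6 * real n)"
    using False r s n by (intro power_le_inverse_if_square_le_one_minus) (auto simp: of_nat_diff)
  moreover have "B_const n * (1 - s / 2) \<le> 3"
  proof -
    have "B_const n * (1 - s / 2) \<le> B_const n"
      using B_const_pos[OF n] s by (intro mult_left_le) auto
    then show ?thesis using B_const_le_exp_1[OF n] exp_le by linarith
  qed
  ultimately have
    "B_const n * (1 - s / 2) * real n * r ^ (n - 1) \<le> 3 * real n * (1 / (6 * real n))"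
    using B_const_pos[OF n] r s by (intro mult_mono) auto
  also have "\<dots> = 1 / 2" using n by simp
  finally have "1 / 2 + B_const n * (1 - s / 2) * real n * r ^ (n - 1) \<le> 1" by simp
  moreover have "0 \<le> 1 / 2 + B_const n * (1 - s / 2) * real n * r ^ (n - 1)"
    using B_const_pos[OF n] r s by simp
  ultimately show ?thesis
    by (intro mult_le_one) (use r in auto)
qed

lemma weighted_deriv_bound_imp_bloch:
  assumes hol: "f holomorphic_on ball 0 1"
    and bound: "\<And>z. z \<in> ball 0 1 \<Longrightarrow> (1 - (norm z)\<^sup>2) * norm (deriv f z) \<le> M"
  shows "bloch f" and "bloch_norm f \<le> norm (f 0) + M"
  using assms unfolding bloch_def bloch_norm_def
  by (auto intro!: bdd_aboveI2 cSUP_least)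

lemma two_term_bloch:
  fixes s :: real
  assumes n: "n \<ge> 2" and s: "0 \<le> s" "s \<le> 2" "2 * ln (6 * real n) \<le> s * (real n - 1)"
  defines "f \<equiv> \<lambda>z. z / 2 + of_real (B_const n * (1 - s / 2)) * z ^ n"
  shows "bloch f" and "bloch_norm f \<le> 1"
proof -
  define c where "c = B_const n * (1 - s / 2)"
  have c: "c \<ge> 0" using B_const_pos[OF n] s by (simp add: c_def)
  have hol: "f holomorphic_on ball 0 1" unfolding f_def by (intro holomorphic_intros) auto
  have "(1 - (norm z)\<^sup>2) * norm (deriv f z) \<le> 1" if z: "z \<in> ball 0 1" for z
  proof -
    have "deriv f z = 1 / 2 + of_real c * of_nat n * z ^ (n - 1)"
      unfolding f_def c_def by (rule DERIV_imp_deriv) (auto intro!: derivative_eq_intros)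
    then have "norm (deriv f z) \<le> 1 / 2 + c * real n * norm z ^ (n - 1)"
      using c norm_triangle_ineq[of "1 / 2" "of_real c * of_nat n * z ^ (n - 1)"]
      by (simp add: norm_mult norm_power)
    then have "(1 - (norm z)\<^sup>2) * norm (deriv f z)
        \<le> (1 - (norm z)\<^sup>2) * (1 / 2 + c * real n * norm z ^ (n - 1))"
      using z by (intro mult_left_mono) (auto simp: abs_square_le_1)
    also have "\<dots> \<le> 1"
      unfolding c_def using n s z by (intro two_term_bloch_weight_le_1) auto
    finally show ?thesis .
  qed
  moreover have "f 0 = 0" using n by (simp add: f_def)
  ultimately show "bloch f" "bloch_norm f \<le> 1"
    using weighted_deriv_bound_imp_bloch[OF hol, of 1] by auto
qed

lemma exists_bloch_function_above_B_const:
  fixes t :: real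
  assumes n: "n \<ge> 2" and ln_le: "ln (6 * real n) \<le> real n - 1"
    and small: "72 * real n powr t * ln (6 * real n) < real n - 1"
  shows "\<exists>(f :: complex \<Rightarrow> complex) (b :: nat \<Rightarrow> real).
            f holomorphic_on ball 0 1 \<and>
            (\<forall>z\<in>ball 0 1. (\<lambda>k. complex_of_real (b k) * z ^ k) sums f z) \<and>
            b 0 = 0 \<and> (\<forall>k. b k \<ge> 0) \<and> f 0 = 0 \<and>
            bloch f \<and> bloch_norm f \<le> 1 \<and>
            (\<Sum>k=1..n. real k powr t * \<bar>b k\<bar>\<^sup>2) > real n powr t * (B_const n)\<^sup>2"
proof -
  define s where "s = 2 * ln (6 * real n) / (real n - 1)"
  define c where "c = B_const n * (1 - s / 2)"
  define b where "b = (\<lambda>k. if k = 1 then 1 / 2 else if k = n then c else 0 :: real)"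
  define f where "f = (\<lambda>z. z / 2 + of_real c * z ^ n :: complex)"
  have s: "0 \<le> s" "s \<le> 2" "2 * ln (6 * real n) \<le> s * (real n - 1)"
    using n ln_le by (auto simp: s_def field_simps)
  have B: "0 < B_const n" "(B_const n)\<^sup>2 \<le> 9"
    using B_const_pos[OF n] B_const_le_exp_1[OF n] exp_le power_mono[of "B_const n" 3 2]
    by auto
  have "(\<lambda>k. of_real (b k) * z ^ k) sums (\<Sum>k\<in>{1, n}. of_real (b k) * z ^ k)" for z
    by (rule sums_finite) (auto simp: b_def)
  also have "(\<Sum>k\<in>{1, n}. of_real (b k) * z ^ k) = f z" for z
    using n by (simp add: f_def b_def)
  finally have "(\<lambda>k. of_real (b k) * z ^ k) sums f z" for z .
  moreover have "(\<Sum>k=1..n. real k powr t * \<bar>b k\<bar>\<^sup>2) = 1 / 4 + real n powr t * c\<^sup>2"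
  proof -
    have "(\<Sum>k=1..n. real k powr t * \<bar>b k\<bar>\<^sup>2) = (\<Sum>k\<in>{1, n}. real k powr t * \<bar>b k\<bar>\<^sup>2)"
      using n by (intro sum.mono_neutral_right) (auto simp: b_def)
    then show ?thesis using n by (simp add: b_def power2_eq_square)
  qed
  moreover have "real n powr t * (B_const n)\<^sup>2 < 1 / 4 + real n powr t * c\<^sup>2"
  proof -
    have "real n powr t * (B_const n)\<^sup>2 - real n powr t * c\<^sup>2
        = real n powr t * (B_const n)\<^sup>2 * (s - s\<^sup>2 / 4)"
      by (simp add: c_def power2_eq_square algebra_simps)
    also have "\<dots> \<le> real n powr t * 9 * s"
    proof -
      have "s\<^sup>2 \<le> 4 * s" using s mult_right_mono[of s 4 s] by (simp add: power2_eq_square)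
      then show ?thesis using B s by (intro mult_mono) auto
    qed
    also have "\<dots> < 1 / 4" using small n by (simp add: s_def field_simps)
    finally show ?thesis by simp
  qed
  moreover have "bloch f" "bloch_norm f \<le> 1"
    using two_term_bloch[OF n s] by (simp_all add: f_def c_def)
  moreover have "f holomorphic_on ball 0 1" unfolding f_def by (intro holomorphic_intros) auto
  moreover have "b k \<ge> 0" for k
    using B s by (simp add: b_def c_def)
  ultimately show ?thesis
    using n by (intro exI[of _ f] exI[of _ b]) (auto simp: f_def b_def)
qed

theorem theorem3p1:
  fixes t :: real
  assumes "t < 1"
  shows "\<exists>N::nat. N \<ge> 2 \<and> (\<forall>n\<ge>N. \<exists>(f :: complex \<Rightarrow> complex) (b :: nat \<Rightarrow> real).
            f holomorphic_on ball 0 1 \<and>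
            (\<forall>z\<in>ball 0 1. (\<lambda>k. complex_of_real (b k) * z ^ k) sums f z) \<and>
            b 0 = 0 \<and> (\<forall>k. b k \<ge> 0) \<and> f 0 = 0 \<and>
            bloch f \<and> bloch_norm f \<le> 1 \<and>
            (\<Sum>k=1..n. real k powr t * \<bar>b k\<bar>\<^sup>2) > real n powr t * (B_const n)\<^sup>2)"
proof -
  have "eventually (\<lambda>n. ln (6 * real n) \<le> real n - 1 \<and>
      72 * real n powr t * ln (6 * real n) < real n - 1) sequentially"
    using assms by (intro eventually_conj) real_asymp+
  then obtain N where N: "\<forall>n\<ge>N. ln (6 * real n) \<le> real n - 1 \<and>
      72 * real n powr t * ln (6 * real n) < real n - 1"
    unfolding eventually_sequentially by blast
  show ?thesis
    by (intro exI[of _ "max 2 N"] conjI allI impI exists_bloch_function_above_B_const)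
      (use N in auto)
qed

end
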